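(* Consider $\dot x=f(x)+\psi(x)$, where $f,\psi:\mathbb R^n\to\mathbb R^n$ are continuous, $f(0)=0$, and there exists $L>0$ with $\|\psi(x)\|\le L\|x\|$ for all $x\in\mathbb R^n$. Suppose there is a continuously differentiable positive definite function $V:\mathbb R^n\to\mathbb R$ such that along trajectories of the nominal system $\dot x=f(x)$, $$\dot V(x)=\frac{\partial V}{\partial x}(x)f(x)\le-aV(x)^p-bV(x)^q$$ with $a,b>0$, $0<p<1$, $q>1$, and suppose there exist $k_1,k_2>0$ such that $V(x)\ge k_1\|x\|^2$ and $\|\frac{\partial V}{\partial x}(x)\|\le k_2\|x\|$ for all $x\in\mathbb R^n$. Then the origin of $\dot x=f(x)+\psi(x)$ is fixed-time stable.
   Context: The origin of $\dot x=F(x)$ is fixed-time stable if it is Lyapunov stable and there exist a neighborhood $D$ of the origin and a constant $T<\infty$ such that every solution with $x(0)\in D$ satisfies $x(t)=0$ for all $t\ge T$ (the bound $T$ being independent of the initial condition in $D$). *)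

theory Defs
  imports "HOL-Analysis.Analysis"
begin

definition is_solution :: "('a::real_normed_vector \<Rightarrow> 'a) \<Rightarrow> (real \<Rightarrow> 'a) \<Rightarrow> bool" where
  "is_solution F x \<longleftrightarrow>
     (\<forall>t\<ge>0. (x has_vector_derivative F (x t)) (at t within {0..}))"

definition lyapunov_stable :: "('a::real_normed_vector \<Rightarrow> 'a) \<Rightarrow> bool" where
  "lyapunov_stable F \<longleftrightarrow>
     (\<forall>\<epsilon>>0. \<exists>\<delta>>0. \<forall>x. is_solution F x \<and> norm (x 0) < \<delta> \<longrightarrow>
        (\<forall>t\<ge>0. norm (x t) < \<epsilon>))"

definition fixed_time_stable :: "('a::real_normed_vector \<Rightarrow> 'a) \<Rightarrow> bool" where
  "fixed_time_stable F \<longleftrightarrow> lyapunov_stable F \<and>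
     (\<exists>D T. open D \<and> 0 \<in> D \<and>
        (\<forall>x. is_solution F x \<and> x 0 \<in> D \<longrightarrow> (\<forall>t\<ge>T. x t = 0)))"

end

theory Submission
  imports Defs
begin

text \<open>Near the origin the perturbation is dominated by the finite-time term of the nominal
  decay estimate: \<open>\<nabla>V \<bullet> \<psi> \<le> c V\<close> with \<open>c = k\<^sub>2 L / k\<^sub>1\<close>, and \<open>c V \<le> (a/2) V\<^sup>p\<close> as soon as
  \<open>V\<close> is below a level \<open>r\<close> depending only on \<open>a, c, p\<close>. On the sublevel set \<open>{V < r}\<close>,
  which is therefore forward invariant, \<open>V\<close> obeys \<open>V' \<le> -(a/2) V\<^sup>p\<close>, so \<open>V\<^sup>1\<^sup>-\<^sup>p\<close>
  decreases at rate at least \<open>(1 - p) a / 2\<close> and reaches zero before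
  \<open>T = r\<^sup>1\<^sup>-\<^sup>p / ((1 - p) a / 2)\<close>, uniformly in the initial state.\<close>

lemma mult_le_powr_if_le_level:
  fixes c v \<alpha> p :: real
  assumes "0 < p" "p < 1" "c > 0" "\<alpha> > 0" "0 \<le> v" "v \<le> (\<alpha> / c) powr (1 / (1 - p))"
  shows "c * v \<le> \<alpha> * v powr p"
proof (cases "v = 0")
  case False
  then have v_pos: "v > 0" using assms(5) by simp
  have "v powr (1 - p) \<le> ((\<alpha> / c) powr (1 / (1 - p))) powr (1 - p)"
    using assms v_pos by (intro powr_mono2) auto
  also have "\<dots> = \<alpha> / c" using assms by (simp add: powr_powr)
  finally have "c * v powr (1 - p) \<le> \<alpha>" using assms(3) by (simp add: field_simps)
  then have "c * v powr (1 - p) * v powr p \<le> \<alpha> * v powr p" by (simp add: mult_right_mono)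
  then show ?thesis using v_pos by (simp add: powr_add[symmetric] mult.assoc)
qed simp

lemma inner_le_of_linear_bounds:
  fixes u w y :: "'a::real_inner"
  assumes "norm u \<le> k2 * norm y" "norm w \<le> L * norm y" "k1 * (norm y)\<^sup>2 \<le> v"
    and "k1 > 0" "k2 \<ge> 0" "L \<ge> 0"
  shows "u \<bullet> w \<le> k2 * L / k1 * v"
proof -
  have "u \<bullet> w \<le> norm u * norm w" by (rule norm_cauchy_schwarz)
  also have "\<dots> \<le> (k2 * norm y) * (L * norm y)"
    using assms by (intro mult_mono) auto
  also have "\<dots> = k2 * L / k1 * (k1 * (norm y)\<^sup>2)"
    using assms(4) by (simp add: power2_eq_square field_simps)
  also have "\<dots> \<le> k2 * L / k1 * v"
    using assms by (intro mult_left_mono) auto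
  finally show ?thesis .
qed

lemma le_initial_if_deriv_nonpos_below_level:
  fixes v v' :: "real \<Rightarrow> real"
  assumes cont: "continuous_on {0..} v"
    and deriv: "\<And>t. t > 0 \<Longrightarrow> (v has_real_derivative v' t) (at t)"
    and nonpos: "\<And>t. t > 0 \<Longrightarrow> v t \<le> r \<Longrightarrow> v' t \<le> 0"
    and below: "v 0 < r" and "0 \<le> t"
  shows "v t \<le> v 0"
proof (rule ccontr)
  assume "\<not> v t \<le> v 0"
  define l where "l = (v 0 + min (v t) r) / 2"
  have l: "v 0 < l" "l < r" "l < v t" using \<open>\<not> v t \<le> v 0\<close> below by (auto simp: l_def)
  define A where "A = {0..t} \<inter> v -` {l..}"
  have "closed A"
    unfolding A_def by (intro continuous_closed_preimage continuous_on_subset[OF cont]) auto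
  moreover have "A \<noteq> {}" "bdd_below A" using \<open>0 \<le> t\<close> l by (auto simp: A_def bdd_below_def)
  ultimately have "Inf A \<in> A" by (rule closed_contains_Inf[rotated 2])
  define s\<^sub>1 where "s\<^sub>1 = Inf A"
  have s\<^sub>1: "0 \<le> s\<^sub>1" "l \<le> v s\<^sub>1" using \<open>Inf A \<in> A\<close> by (auto simp: A_def s\<^sub>1_def)
  have before_s\<^sub>1: "v s < l" if "0 \<le> s" "s < s\<^sub>1" for s
  proof (rule ccontr)
    assume "\<not> v s < l"
    then have "s \<in> A" using that \<open>Inf A \<in> A\<close> by (auto simp: A_def s\<^sub>1_def)
    then have "s\<^sub>1 \<le> s" unfolding s\<^sub>1_def using \<open>bdd_below A\<close> by (rule cInf_lower)
    then show False using that by simp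
  qed
  have "v s\<^sub>1 \<le> v 0"
  proof (rule DERIV_nonpos_imp_decreasing_open[OF s\<^sub>1(1)])
    fix s assume "0 < s" "s < s\<^sub>1"
    then have "v' s \<le> 0" using before_s\<^sub>1[of s] l by (intro nonpos) auto
    then show "\<exists>d. DERIV v s :> d \<and> d \<le> 0" using deriv \<open>0 < s\<close> by blast
  qed (rule continuous_on_subset[OF cont], auto)
  then show False using s\<^sub>1 l by simp
qed

lemma powr_decay_comparison:
  fixes v v' :: "real \<Rightarrow> real"
  assumes cont: "continuous_on {0..} v"
    and deriv: "\<And>t. t > 0 \<Longrightarrow> (v has_real_derivative v' t) (at t)"
    and decay: "\<And>t. t > 0 \<Longrightarrow> v' t \<le> - \<alpha> * v t powr p"
    and "p < 1" "0 \<le> t" and pos: "\<And>s. 0 \<le> s \<Longrightarrow> s \<le> t \<Longrightarrow> v s > 0"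
  shows "v t powr (1 - p) + (1 - p) * \<alpha> * t \<le> v 0 powr (1 - p)"
proof -
  define k where "k = (1 - p) * \<alpha>"
  define w where "w = (\<lambda>s. v s powr (1 - p) + k * s)"
  have "w t \<le> w 0"
  proof (rule DERIV_nonpos_imp_decreasing_open[OF \<open>0 \<le> t\<close>])
    fix s assume s: "0 < s" "s < t"
    have "v s > 0" using pos s by simp
    have "DERIV (\<lambda>s. v s powr (1 - p)) s :> (1 - p) * v s powr (1 - p - 1) * v' s"
      using DERIV_fun_powr[OF deriv[OF s(1)] \<open>v s > 0\<close>, of "1 - p"] by simp
    then have D: "DERIV w s :> (1 - p) * v s powr (1 - p - 1) * v' s + k * 1"
      unfolding w_def by (rule DERIV_add[OF _ DERIV_cmult[OF DERIV_ident]])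
    have "(1 - p) * v s powr (1 - p - 1) * v' s
        \<le> (1 - p) * v s powr (1 - p - 1) * (- \<alpha> * v s powr p)"
      using decay[OF s(1)] \<open>p < 1\<close> by (intro mult_left_mono) auto
    also have "\<dots> = - k * (v s powr (1 - p - 1) * v s powr p)"
      by (simp add: k_def algebra_simps)
    also have "v s powr (1 - p - 1) * v s powr p = 1"
      using \<open>v s > 0\<close> by (simp add: powr_add[symmetric])
    finally show "\<exists>d. DERIV w s :> d \<and> d \<le> 0" using D by auto
  next
    show "continuous_on {0..t} w"
      unfolding w_def using pos continuous_on_subset[OF cont, of "{0..t}"]
      by (intro continuous_on_add continuous_on_powr continuous_on_mult continuous_on_const
          continuous_on_id) (auto simp: less_imp_neq[symmetric])
  qed
  then show ?thesis by (simp add: w_def k_def)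
qed

lemma powr_decay_vanishes:
  fixes v v' :: "real \<Rightarrow> real"
  assumes cont: "continuous_on {0..} v"
    and deriv: "\<And>t. t > 0 \<Longrightarrow> (v has_real_derivative v' t) (at t)"
    and decay: "\<And>t. t > 0 \<Longrightarrow> v' t \<le> - \<alpha> * v t powr p"
    and "\<alpha> > 0" "0 < p" "p < 1"
    and settled: "t \<ge> v 0 powr (1 - p) / ((1 - p) * \<alpha>)"
  shows "v t \<le> 0"
proof (rule ccontr)
  assume "\<not> v t \<le> 0"
  have "(1 - p) * \<alpha> > 0" using assms by simp
  then have "0 \<le> v 0 powr (1 - p) / ((1 - p) * \<alpha>)" by simp
  then have "t \<ge> 0" using settled by linarith
  have nonpos: "v' s \<le> 0" if "s > 0" for s
  proof -
    have "0 \<le> \<alpha> * v s powr p" using \<open>\<alpha> > 0\<close> by simp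
    then show ?thesis using decay[OF that] by linarith
  qed
  have pos: "v s > 0" if "0 \<le> s" "s \<le> t" for s
  proof -
    have "v t \<le> v s"
    proof (rule DERIV_nonpos_imp_decreasing_open[OF \<open>s \<le> t\<close>])
      fix y assume "s < y"
      then have "y > 0" using \<open>0 \<le> s\<close> by simp
      then show "\<exists>d. DERIV v y :> d \<and> d \<le> 0" using deriv nonpos by blast
    qed (rule continuous_on_subset[OF cont], use that in auto)
    then show ?thesis using \<open>\<not> v t \<le> 0\<close> by simp
  qed
  have "v t powr (1 - p) + (1 - p) * \<alpha> * t \<le> v 0 powr (1 - p)"
    by (rule powr_decay_comparison[OF cont deriv decay \<open>p < 1\<close> \<open>t \<ge> 0\<close> pos])
  moreover have "v 0 powr (1 - p) \<le> (1 - p) * \<alpha> * t"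
    using settled \<open>(1 - p) * \<alpha> > 0\<close> by (simp add: field_simps)
  moreover have "v t powr (1 - p) > 0" using \<open>\<not> v t \<le> 0\<close> by simp
  ultimately show False by linarith
qed

lemma is_solution_Lyapunov_derivative:
  fixes F :: "'a::real_inner \<Rightarrow> 'a"
  assumes sol: "is_solution F x"
    and V_deriv: "\<And>y. (V has_derivative (\<lambda>h. gradV y \<bullet> h)) (at y)"
  shows "continuous_on {0..} (\<lambda>t. V (x t))"
    and "\<And>t. t > 0 \<Longrightarrow> ((\<lambda>t. V (x t)) has_real_derivative gradV (x t) \<bullet> F (x t)) (at t)"
proof -
  have within: "((\<lambda>t. V (x t)) has_real_derivative gradV (x t) \<bullet> F (x t)) (at t within {0..})"
    if "t \<ge> 0" for t
  proof -
    have "(x has_derivative (\<lambda>h. h *\<^sub>R F (x t))) (at t within {0..})"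
      using sol that unfolding is_solution_def has_vector_derivative_def by blast
    from diff_chain_within[OF this has_derivative_at_withinI[OF V_deriv]]
    show ?thesis unfolding has_field_derivative_def by (simp add: o_def mult.commute[of _ "gradV (x t) \<bullet> F (x t)"])
  qed
  then show "continuous_on {0..} (\<lambda>t. V (x t))"
    unfolding continuous_on_eq_continuous_within by (metis DERIV_continuous atLeast_iff)
  show "((\<lambda>t. V (x t)) has_real_derivative gradV (x t) \<bullet> F (x t)) (at t)" if "t > 0" for t
    using within[of t] that at_within_interior[of t "{0..}"] by simp
qed

context
  fixes F gradV :: "'a::real_inner \<Rightarrow> 'a" and V :: "'a \<Rightarrow> real" and k1 r \<alpha> p :: real
  assumes V_deriv: "\<And>y. (V has_derivative (\<lambda>h. gradV y \<bullet> h)) (at y)"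
    and V0: "V 0 = 0" and V_lower: "\<And>y. V y \<ge> k1 * (norm y)\<^sup>2" and k1_pos: "k1 > 0"
    and decay: "\<And>y. V y \<le> r \<Longrightarrow> gradV y \<bullet> F y \<le> - \<alpha> * V y powr p"
    and \<alpha>_pos: "\<alpha> > 0" and p_bounds: "0 < p" "p < 1"
begin

lemma Lyapunov_nonneg: "0 \<le> V y"
  using k1_pos by (intro order_trans[OF _ V_lower]) simp

lemma deriv_nonpos_below_level:
  assumes "V y \<le> r"
  shows "gradV y \<bullet> F y \<le> 0"
proof -
  have "0 \<le> \<alpha> * V y powr p" using \<alpha>_pos by simp
  then show ?thesis using decay[OF assms] by linarith
qed

lemma solution_in_sublevel_settles:
  assumes sol: "is_solution F x" and below: "V (x 0) < r"
  shows "\<And>t. t \<ge> 0 \<Longrightarrow> V (x t) \<le> V (x 0)"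
    and "\<And>t. t \<ge> r powr (1 - p) / ((1 - p) * \<alpha>) \<Longrightarrow> x t = 0"
proof -
  note v_cont = is_solution_Lyapunov_derivative(1)[OF sol V_deriv]
  note v_deriv = is_solution_Lyapunov_derivative(2)[OF sol V_deriv]
  show invariant: "V (x t) \<le> V (x 0)" if "t \<ge> 0" for t
    using le_initial_if_deriv_nonpos_below_level[OF v_cont v_deriv deriv_nonpos_below_level below that]
    by blast
  have decay_along: "gradV (x t) \<bullet> F (x t) \<le> - \<alpha> * V (x t) powr p" if "t > 0" for t
    using invariant[of t] below that by (intro decay) auto
  show "x t = 0" if settled: "t \<ge> r powr (1 - p) / ((1 - p) * \<alpha>)" for t
  proof -
    have "V (x 0) powr (1 - p) \<le> r powr (1 - p)"
      using Lyapunov_nonneg below p_bounds by (intro powr_mono2) auto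
    then have "V (x 0) powr (1 - p) / ((1 - p) * \<alpha>) \<le> r powr (1 - p) / ((1 - p) * \<alpha>)"
      using \<alpha>_pos p_bounds by (intro divide_right_mono) auto
    then have "V (x t) \<le> 0"
      using powr_decay_vanishes[OF v_cont v_deriv decay_along \<alpha>_pos p_bounds] settled by simp
    then have "k1 * (norm (x t))\<^sup>2 \<le> 0" using V_lower[of "x t"] by linarith
    then show ?thesis using k1_pos by (simp add: mult_le_0_iff)
  qed
qed

lemma fixed_time_stable_if_local_powr_decay:
  assumes r_pos: "r > 0"
  shows "fixed_time_stable F"
proof -
  have V_at: "isCont V y" for y using V_deriv has_derivative_continuous by blast
  have "lyapunov_stable F"
    unfolding lyapunov_stable_def
  proof (intro allI impI)
    fix \<epsilon> :: real assume "\<epsilon> > 0"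
    have "min r (k1 * \<epsilon>\<^sup>2) > 0" using r_pos k1_pos \<open>\<epsilon> > 0\<close> by simp
    then obtain \<delta> where "\<delta> > 0" and \<delta>: "\<And>y. dist y 0 < \<delta> \<Longrightarrow> dist (V y) (V 0) < min r (k1 * \<epsilon>\<^sup>2)"
      using V_at[of 0] unfolding continuous_at_eps_delta by blast
    show "\<exists>\<delta>>0. \<forall>x. is_solution F x \<and> norm (x 0) < \<delta> \<longrightarrow> (\<forall>t\<ge>0. norm (x t) < \<epsilon>)"
    proof (intro exI[of _ \<delta>] conjI allI impI \<open>\<delta> > 0\<close>)
      fix x and t :: real assume x: "is_solution F x \<and> norm (x 0) < \<delta>" and "0 \<le> t"
      then have "V (x 0) < min r (k1 * \<epsilon>\<^sup>2)" using \<delta>[of "x 0"] V0 by (simp add: dist_norm abs_less_iff)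
      then have "k1 * (norm (x t))\<^sup>2 < k1 * \<epsilon>\<^sup>2"
        using solution_in_sublevel_settles(1)[of x t] V_lower[of "x t"] x \<open>0 \<le> t\<close> by force
      then show "norm (x t) < \<epsilon>"
        using k1_pos \<open>\<epsilon> > 0\<close> by (simp add: power_less_imp_less_base)
    qed
  qed
  moreover have "open (V -` {..<r})" by (intro continuous_open_vimage V_at) simp
  moreover have "0 \<in> V -` {..<r}" using V0 r_pos by simp
  ultimately show ?thesis
    unfolding fixed_time_stable_def using solution_in_sublevel_settles(2) by blast
qed

end

theorem corollary2:
  fixes f \<psi> :: "'a::euclidean_space \<Rightarrow> 'a"
    and V :: "'a \<Rightarrow> real" and gradV :: "'a \<Rightarrow> 'a"
    and L a b p q k1 k2 :: real
  assumes f_cont: "continuous_on UNIV f"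
    and psi_cont: "continuous_on UNIV \<psi>"
    and f0: "f 0 = 0"
    and L_pos: "L > 0"
    and psi_bound: "\<And>x. norm (\<psi> x) \<le> L * norm x"
    and V_deriv: "\<And>x. (V has_derivative (\<lambda>h. gradV x \<bullet> h)) (at x)"
    and gradV_cont: "continuous_on UNIV gradV"
    and V0: "V 0 = 0"
    and V_pos: "\<And>x. x \<noteq> 0 \<Longrightarrow> V x > 0"
    and a_pos: "a > 0" and b_pos: "b > 0"
    and p_bounds: "0 < p" "p < 1" and q_gt: "q > 1"
    and Vdot: "\<And>x. gradV x \<bullet> f x \<le> - a * V x powr p - b * V x powr q"
    and k1_pos: "k1 > 0" and k2_pos: "k2 > 0"
    and V_lower: "\<And>x. V x \<ge> k1 * (norm x)\<^sup>2"
    and gradV_bound: "\<And>x. norm (gradV x) \<le> k2 * norm x"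
  shows "fixed_time_stable (\<lambda>x. f x + \<psi> x)"
proof -
  define c where "c = k2 * L / k1"
  define r where "r = (a / 2 / c) powr (1 / (1 - p))"
  have "c > 0" using k1_pos k2_pos L_pos by (simp add: c_def)
  have decay: "gradV y \<bullet> (f y + \<psi> y) \<le> - (a / 2) * V y powr p" if "V y \<le> r" for y
  proof -
    have "0 \<le> V y" by (metis V0 V_pos order_less_imp_le order_refl)
    have "gradV y \<bullet> \<psi> y \<le> c * V y"
      unfolding c_def using k1_pos k2_pos L_pos
      by (intro inner_le_of_linear_bounds[OF gradV_bound psi_bound V_lower]) auto
    also have "\<dots> \<le> a / 2 * V y powr p"
      using p_bounds \<open>c > 0\<close> a_pos \<open>0 \<le> V y\<close> that unfolding r_def
      by (intro mult_le_powr_if_le_level) auto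
    finally have "gradV y \<bullet> \<psi> y \<le> a / 2 * V y powr p" .
    moreover have "0 \<le> b * V y powr q" using b_pos by simp
    ultimately show ?thesis unfolding inner_add_right using Vdot[of y] by linarith
  qed
  have "r > 0" using a_pos \<open>c > 0\<close> by (simp add: r_def)
  moreover have "a / 2 > 0" using a_pos by simp
  ultimately show ?thesis
    using fixed_time_stable_if_local_powr_decay[where F = "\<lambda>x. f x + \<psi> x",
        OF V_deriv V0 V_lower k1_pos decay _ p_bounds]
    by blast
qed

end
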